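(* Let $1/4\le\beta<1/3$ and let $G$ be a graph of order $n$ with minimum degree $(1-\beta)n$. Then for every triangle $T\in\mathcal{K}_3$, $$\widetilde D(T)\ \ge\ \left(1-\frac{2}{29-75\beta}\right)\frac{4\beta-1}{1-2\beta}D_+(T)-(1-2\beta)\sum_{e\in\mathcal{K}_2(T)}\frac{D_+(e)}{D_+(e)+\beta}.$$ Moreover, if equality holds then $T$ is not heavy and $d(v)=(1-\beta)n$ for all $v\in T$.
   Context: All graphs are finite and simple. For a graph $G$, $\mathcal{K}_t$ is the set of $t$-cliques (identified with vertex sets); $\mathcal{K}_t(S)$ is the set of $t$-cliques contained in a clique $S$. The degree $d(T)$ of a clique $T$ is the number of cliques with one more vertex containing $T$, and $D(T)=d(T)/n$. Here $p=\lceil\beta^{-1}\rceil-1=3$. For $T\in\mathcal{K}_t$, $1\le t\le 4$, $D_-(T)=\min\{D(T),(4-t)\beta\}$, $D_+(T)=D(T)-D_-(T)$, and $T$ is heavy if $D_+(T)>0$. For a triangle $T$, $\widetilde D(T)=\sum_{e\in\mathcal{K}_2(T)}D_-(e)-\big(2-3\beta+D_-(T)\big)$. *)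

theory Defs
  imports Complex_Main
begin

definition sgraph :: "'a set \<Rightarrow> ('a \<Rightarrow> 'a \<Rightarrow> bool) \<Rightarrow> bool" where
  "sgraph V adj \<longleftrightarrow> finite V \<and> (\<forall>u v. adj u v \<longrightarrow> u \<in> V \<and> v \<in> V)
     \<and> (\<forall>u v. adj u v \<longrightarrow> adj v u) \<and> (\<forall>v. \<not> adj v v)"

definition vdeg :: "'a set \<Rightarrow> ('a \<Rightarrow> 'a \<Rightarrow> bool) \<Rightarrow> 'a \<Rightarrow> nat" where
  "vdeg V adj v = card {u \<in> V. adj v u}"

definition is_clique :: "'a set \<Rightarrow> ('a \<Rightarrow> 'a \<Rightarrow> bool) \<Rightarrow> 'a set \<Rightarrow> bool" where
  "is_clique V adj S \<longleftrightarrow> S \<subseteq> V \<and> (\<forall>u\<in>S. \<forall>v\<in>S. u \<noteq> v \<longrightarrow> adj u v)"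

definition cliques :: "'a set \<Rightarrow> ('a \<Rightarrow> 'a \<Rightarrow> bool) \<Rightarrow> nat \<Rightarrow> 'a set set" where
  "cliques V adj t = {S. is_clique V adj S \<and> finite S \<and> card S = t}"

definition cliques_in :: "'a set \<Rightarrow> ('a \<Rightarrow> 'a \<Rightarrow> bool) \<Rightarrow> nat \<Rightarrow> 'a set \<Rightarrow> 'a set set" where
  "cliques_in V adj t S = {e \<in> cliques V adj t. e \<subseteq> S}"

definition clique_deg :: "'a set \<Rightarrow> ('a \<Rightarrow> 'a \<Rightarrow> bool) \<Rightarrow> 'a set \<Rightarrow> nat" where
  "clique_deg V adj T = card {S \<in> cliques V adj (card T + 1). T \<subseteq> S}"

definition cD :: "'a set \<Rightarrow> ('a \<Rightarrow> 'a \<Rightarrow> bool) \<Rightarrow> 'a set \<Rightarrow> real" where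
  "cD V adj T = real (clique_deg V adj T) / real (card V)"

definition Dminus :: "real \<Rightarrow> 'a set \<Rightarrow> ('a \<Rightarrow> 'a \<Rightarrow> bool) \<Rightarrow> 'a set \<Rightarrow> real" where
  "Dminus \<beta> V adj T = min (cD V adj T) ((4 - real (card T)) * \<beta>)"

definition Dplus :: "real \<Rightarrow> 'a set \<Rightarrow> ('a \<Rightarrow> 'a \<Rightarrow> bool) \<Rightarrow> 'a set \<Rightarrow> real" where
  "Dplus \<beta> V adj T = cD V adj T - Dminus \<beta> V adj T"

definition heavy :: "real \<Rightarrow> 'a set \<Rightarrow> ('a \<Rightarrow> 'a \<Rightarrow> bool) \<Rightarrow> 'a set \<Rightarrow> bool" where
  "heavy \<beta> V adj T \<longleftrightarrow> Dplus \<beta> V adj T > 0"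

definition Dtilde :: "real \<Rightarrow> 'a set \<Rightarrow> ('a \<Rightarrow> 'a \<Rightarrow> bool) \<Rightarrow> 'a set \<Rightarrow> real" where
  "Dtilde \<beta> V adj T = (\<Sum>e\<in>cliques_in V adj 2 T. Dminus \<beta> V adj e) - (2 - 3 * \<beta> + Dminus \<beta> V adj T)"

end

theory Submission
  imports Defs
begin

(* Write T = {a,b,c}, normalise all clique degrees by n = |V|, and put
   x_v = D({v}) = d(v)/n, y_e = D(e) for the three edges e of T and t = D(T).
   Two graph facts are needed: codegrees do not exceed degrees (y_ab <= x_a, etc.),
   since enlarging a clique shrinks its common neighbourhood; and inclusion-exclusion
   for the three neighbourhoods N(a), N(b), N(c) inside V gives
   x_a + x_b + x_c - 1 <= y_ab + y_ac + y_bc - t.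
   The rest is real arithmetic.  With P = D_+(T) and p_e = D_+(e), the difference
   "left side - right side" of the theorem splits into the inclusion-exclusion slack,
   the slack (1 - c) P of the triangle term (the coefficient c is < 1), and for every
   edge e with chosen endpoint v the slack (x_v - (1 - beta)) - (p_e - (1-2beta) p_e/(p_e+beta)).
   Each slack is nonnegative, and the edge slack vanishes only if x_v = 1 - beta. *)

(* Key identity:
   with w = p/(p+beta) in [0,1) the loss equals w (p - (1 - 3 beta)). *)
lemma edge_loss_dichotomy:
  fixes \<beta> y :: real
  assumes "0 < \<beta>" and "\<beta> < 1/3"
  defines "p \<equiv> y - min y (2 * \<beta>)"
  shows "p - (1 - 2*\<beta>) * (p / (p + \<beta>)) \<le> 0 \<or> p - (1 - 2*\<beta>) * (p / (p + \<beta>)) < y - (1 - \<beta>)"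
proof -
  define w where "w = p / (p + \<beta>)"
  have p0: "0 \<le> p" unfolding p_def by simp
  have w0: "0 \<le> w" and w1: "w < 1" using p0 assms(1) unfolding w_def by simp_all
  have "p = w * (p + \<beta>)" using p0 assms(1) unfolding w_def by simp
  then have factor: "p - (1 - 2*\<beta>) * w = w * (p - (1 - 3*\<beta>))" by (simp add: algebra_simps)
  have "w * (p - (1 - 3*\<beta>)) \<le> 0 \<or> w * (p - (1 - 3*\<beta>)) < y - (1 - \<beta>)"
  proof (cases "p - (1 - 3*\<beta>) \<le> 0")
    case True
    have "w * (p - (1 - 3*\<beta>)) \<le> 0" using w0 True by (rule mult_nonneg_nonpos)
    then show ?thesis by (rule disjI1)
  next
    case False
    then have "p - (1 - 3*\<beta>) = y - (1 - \<beta>)" using assms(2) unfolding p_def by (auto simp: min_def)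
    moreover have "w * (p - (1 - 3*\<beta>)) < p - (1 - 3*\<beta>)" using False w1 by simp
    ultimately show ?thesis by (intro disjI2) linarith
  qed
  then show ?thesis unfolding w_def[symmetric] factor .
qed

lemma edge_loss_bound:
  fixes \<beta> x y :: real
  assumes "0 < \<beta>" and "\<beta> < 1/3" and "y \<le> x" and "1 - \<beta> \<le> x"
  defines "p \<equiv> y - min y (2 * \<beta>)"
  shows "p - (1 - 2*\<beta>) * (p / (p + \<beta>)) \<le> x - (1 - \<beta>)"
    and "p - (1 - 2*\<beta>) * (p / (p + \<beta>)) = x - (1 - \<beta>) \<Longrightarrow> x = 1 - \<beta>"
  using edge_loss_dichotomy[OF assms(1,2), of y] assms(3,4) unfolding p_def by linarith+

lemma coefficient_lt_one:
  fixes \<beta> :: real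
  assumes "1/4 \<le> \<beta>" and "\<beta> < 1/3"
  shows "(1 - 2 / (29 - 75*\<beta>)) * ((4*\<beta> - 1) / (1 - 2*\<beta>)) < 1"
proof -
  have k0: "0 < 1 - 2 / (29 - 75*\<beta>)" and k1: "1 - 2 / (29 - 75*\<beta>) \<le> 1"
    using assms by (auto simp: field_simps)
  have r0: "0 \<le> (4*\<beta> - 1) / (1 - 2*\<beta>)" and r1: "(4*\<beta> - 1) / (1 - 2*\<beta>) < 1"
    using assms by (auto simp: field_simps)
  have "(1 - 2 / (29 - 75*\<beta>)) * ((4*\<beta> - 1) / (1 - 2*\<beta>)) \<le> (4*\<beta> - 1) / (1 - 2*\<beta>)"
    using mult_left_le_one_le[OF r0 _ k1] k0 by (simp add: mult.commute)
  then show ?thesis using r1 by linarith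
qed

lemma triangle_loss_inequality:
  fixes \<beta> x\<^sub>a x\<^sub>b x\<^sub>c y\<^sub>a\<^sub>b y\<^sub>a\<^sub>c y\<^sub>b\<^sub>c t :: real
  assumes \<beta>: "1/4 \<le> \<beta>" "\<beta> < 1/3"
    and deg: "1 - \<beta> \<le> x\<^sub>a" "1 - \<beta> \<le> x\<^sub>b" "1 - \<beta> \<le> x\<^sub>c"
    and codeg: "y\<^sub>a\<^sub>b \<le> x\<^sub>a" "y\<^sub>a\<^sub>c \<le> x\<^sub>c" "y\<^sub>b\<^sub>c \<le> x\<^sub>b"
    and incl_excl: "x\<^sub>a + x\<^sub>b + x\<^sub>c - 1 \<le> y\<^sub>a\<^sub>b + y\<^sub>a\<^sub>c + y\<^sub>b\<^sub>c - t"
  defines "f \<equiv> \<lambda>y. (y - min y (2*\<beta>)) - (1 - 2*\<beta>) * ((y - min y (2*\<beta>)) / ((y - min y (2*\<beta>)) + \<beta>))"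
    and "L \<equiv> min y\<^sub>a\<^sub>b (2*\<beta>) + min y\<^sub>a\<^sub>c (2*\<beta>) + min y\<^sub>b\<^sub>c (2*\<beta>) - (2 - 3*\<beta> + min t \<beta>)"
    and "R \<equiv> (1 - 2 / (29 - 75*\<beta>)) * ((4*\<beta> - 1) / (1 - 2*\<beta>)) * (t - min t \<beta>)
       - (1 - 2*\<beta>) * ((y\<^sub>a\<^sub>b - min y\<^sub>a\<^sub>b (2*\<beta>)) / ((y\<^sub>a\<^sub>b - min y\<^sub>a\<^sub>b (2*\<beta>)) + \<beta>)
                     + (y\<^sub>a\<^sub>c - min y\<^sub>a\<^sub>c (2*\<beta>)) / ((y\<^sub>a\<^sub>c - min y\<^sub>a\<^sub>c (2*\<beta>)) + \<beta>)
                     + (y\<^sub>b\<^sub>c - min y\<^sub>b\<^sub>c (2*\<beta>)) / ((y\<^sub>b\<^sub>c - min y\<^sub>b\<^sub>c (2*\<beta>)) + \<beta>))"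
  shows "R \<le> L"
    and "L = R \<Longrightarrow> t - min t \<beta> \<le> 0 \<and> x\<^sub>a = 1 - \<beta> \<and> x\<^sub>b = 1 - \<beta> \<and> x\<^sub>c = 1 - \<beta>"
proof -
  define c where "c = (1 - 2 / (29 - 75*\<beta>)) * ((4*\<beta> - 1) / (1 - 2*\<beta>))"
  define P where "P = t - min t \<beta>"
  have \<beta>0: "0 < \<beta>" using \<beta> by simp
  have slack_P: "0 \<le> (1 - c) * P" and c1: "c < 1"
    using coefficient_lt_one[OF \<beta>] unfolding c_def P_def by simp_all
  have slack_ab: "0 \<le> (x\<^sub>a - (1 - \<beta>)) - f y\<^sub>a\<^sub>b"
    and slack_ac: "0 \<le> (x\<^sub>c - (1 - \<beta>)) - f y\<^sub>a\<^sub>c"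
    and slack_bc: "0 \<le> (x\<^sub>b - (1 - \<beta>)) - f y\<^sub>b\<^sub>c"
    using edge_loss_bound(1)[OF \<beta>0 \<beta>(2)] codeg deg unfolding f_def by fastforce+
  have gap: "L - R = (y\<^sub>a\<^sub>b + y\<^sub>a\<^sub>c + y\<^sub>b\<^sub>c - t - (x\<^sub>a + x\<^sub>b + x\<^sub>c - 1))
      + ((x\<^sub>a - (1 - \<beta>)) - f y\<^sub>a\<^sub>b) + ((x\<^sub>c - (1 - \<beta>)) - f y\<^sub>a\<^sub>c) + ((x\<^sub>b - (1 - \<beta>)) - f y\<^sub>b\<^sub>c)
      + (1 - c) * P"
    unfolding L_def R_def c_def P_def f_def by (simp add: algebra_simps)
  show "R \<le> L" using gap slack_P slack_ab slack_ac slack_bc incl_excl by linarith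
  assume "L = R"
  then have "(1 - c) * P = 0" and "f y\<^sub>a\<^sub>b = x\<^sub>a - (1 - \<beta>)"
    and "f y\<^sub>a\<^sub>c = x\<^sub>c - (1 - \<beta>)" and "f y\<^sub>b\<^sub>c = x\<^sub>b - (1 - \<beta>)"
    using gap slack_P slack_ab slack_ac slack_bc incl_excl by linarith+
  then show "t - min t \<beta> \<le> 0 \<and> x\<^sub>a = 1 - \<beta> \<and> x\<^sub>b = 1 - \<beta> \<and> x\<^sub>c = 1 - \<beta>"
    using c1 edge_loss_bound(2)[OF \<beta>0 \<beta>(2)] codeg deg unfolding f_def P_def by auto
qed

definition common_nbhd :: "'a set \<Rightarrow> ('a \<Rightarrow> 'a \<Rightarrow> bool) \<Rightarrow> 'a set \<Rightarrow> 'a set" where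
  "common_nbhd V adj K = {w \<in> V. \<forall>u\<in>K. adj u w}"

lemma clique_deg_common_nbhd:
  assumes G: "sgraph V adj" and K: "is_clique V adj K" and fK: "finite K"
  shows "clique_deg V adj K = card (common_nbhd V adj K)"
proof -
  let ?N = "common_nbhd V adj K"
  have irr: "\<And>v. \<not> adj v v" and sym: "\<And>u v. adj u v \<Longrightarrow> adj v u"
    using G unfolding sgraph_def by auto
  have outside: "w \<notin> K" if "w \<in> ?N" for w using that irr unfolding common_nbhd_def by auto
  have inj: "inj_on (\<lambda>w. insert w K) ?N"
    by (rule inj_onI) (metis insertE insertI1 outside)
  have "{S \<in> cliques V adj (card K + 1). K \<subseteq> S} = (\<lambda>w. insert w K) ` ?N"
  proof (intro equalityI subsetI)
    fix S assume "S \<in> {S \<in> cliques V adj (card K + 1). K \<subseteq> S}"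
    then have cS: "is_clique V adj S" and crd: "card S = card K + 1" and KS: "K \<subseteq> S"
      unfolding cliques_def by auto
    have "card (S - K) = 1" using crd KS fK by (simp add: card_Diff_subset)
    then obtain w where w: "S - K = {w}" by (auto simp: card_Suc_eq)
    then have S: "S = insert w K" using KS by auto
    have "w \<in> ?N" using cS S w unfolding is_clique_def common_nbhd_def by auto
    then show "S \<in> (\<lambda>w. insert w K) ` ?N" using S by auto
  next
    fix S assume "S \<in> (\<lambda>w. insert w K) ` ?N"
    then obtain w where w: "w \<in> ?N" and S: "S = insert w K" by auto
    have "is_clique V adj S" using K w S sym unfolding is_clique_def common_nbhd_def by auto
    moreover have "card S = card K + 1" using S outside[OF w] fK by simp
    ultimately show "S \<in> {S \<in> cliques V adj (card K + 1). K \<subseteq> S}"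
      unfolding cliques_def using S fK by auto
  qed
  then show ?thesis unfolding clique_deg_def using card_image[OF inj] by simp
qed

(* Inclusion-exclusion for three subsets of a finite set, as an inequality
   (the union fits into V), stated in nat without subtraction. *)
lemma card_three_sets_incl_excl:
  assumes "finite V" and "A \<subseteq> V" and "B \<subseteq> V" and "C \<subseteq> V"
  shows "card A + card B + card C + card (A \<inter> B \<inter> C)
           \<le> card V + card (A \<inter> B) + card (A \<inter> C) + card (B \<inter> C)"
proof -
  have fin: "finite A" "finite B" "finite C" using assms finite_subset by blast+
  have "card A + card B = card (A \<union> B) + card (A \<inter> B)"
    using fin(1,2) by (rule card_Un_Int)
  moreover have "card (A \<union> B) + card C = card (A \<union> B \<union> C) + card ((A \<inter> C) \<union> (B \<inter> C))"
    using card_Un_Int[of "A \<union> B" C] fin by (simp add: Int_Un_distrib2)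
  moreover have "card (A \<inter> C) + card (B \<inter> C) = card ((A \<inter> C) \<union> (B \<inter> C)) + card (A \<inter> B \<inter> C)"
    using card_Un_Int[of "A \<inter> C" "B \<inter> C"] fin by (simp add: Int_ac)
  moreover have "card (A \<union> B \<union> C) \<le> card V" using assms by (simp add: card_mono)
  ultimately show ?thesis by linarith
qed

lemma common_nbhd_antimono:
  "K \<subseteq> K' \<Longrightarrow> common_nbhd V adj K' \<subseteq> common_nbhd V adj K"
  unfolding common_nbhd_def by auto

lemma cD_antimono:
  assumes G: "sgraph V adj" and K': "is_clique V adj K'" "finite K'" and KK': "K \<subseteq> K'"
  shows "cD V adj K' \<le> cD V adj K"
proof -
  have K: "is_clique V adj K" "finite K"
    using K' KK' finite_subset unfolding is_clique_def by blast+
  have "finite (common_nbhd V adj K)" using G unfolding sgraph_def common_nbhd_def by simp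
  then have "card (common_nbhd V adj K') \<le> card (common_nbhd V adj K)"
    using common_nbhd_antimono[OF KK'] by (rule card_mono)
  then show ?thesis
    unfolding cD_def clique_deg_common_nbhd[OF G K'] clique_deg_common_nbhd[OF G K]
    by (simp add: divide_right_mono)
qed

lemma vdeg_eq_clique_deg:
  assumes G: "sgraph V adj" and v: "v \<in> V"
  shows "vdeg V adj v = clique_deg V adj {v}"
proof -
  have "is_clique V adj {v}" using v unfolding is_clique_def by simp
  then show ?thesis
    using clique_deg_common_nbhd[OF G] unfolding vdeg_def common_nbhd_def by simp
qed

lemma triangle_incl_excl:
  assumes G: "sgraph V adj" and T: "is_clique V adj {a, b, c}"
  shows "cD V adj {a} + cD V adj {b} + cD V adj {c} - 1
           \<le> cD V adj {a, b} + cD V adj {a, c} + cD V adj {b, c} - cD V adj {a, b, c}"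
proof -
  let ?N = "common_nbhd V adj"
  have fV: "finite V" using G unfolding sgraph_def by simp
  have n0: "0 < real (card V)" using T fV unfolding is_clique_def by (auto simp: card_gt_0_iff)
  have cl: "is_clique V adj K" if "K \<subseteq> {a, b, c}" for K
    using T that unfolding is_clique_def by blast
  have deg: "cD V adj K = real (card (?N K)) / real (card V)" if "K \<subseteq> {a, b, c}" for K
    unfolding cD_def using clique_deg_common_nbhd[OF G cl[OF that]] finite_subset[OF that] by simp
  have N: "?N {a, b} = ?N {a} \<inter> ?N {b}" "?N {a, c} = ?N {a} \<inter> ?N {c}"
    "?N {b, c} = ?N {b} \<inter> ?N {c}" "?N {a, b, c} = ?N {a} \<inter> ?N {b} \<inter> ?N {c}"
    unfolding common_nbhd_def by auto
  define X where "X = real (card (?N {a})) + real (card (?N {b})) + real (card (?N {c}))"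
  define Y where "Y = real (card (?N {a, b})) + real (card (?N {a, c})) + real (card (?N {b, c}))
                       - real (card (?N {a, b, c}))"
  have "X - real (card V) \<le> Y"
    using card_three_sets_incl_excl[OF fV, of "?N {a}" "?N {b}" "?N {c}"]
    unfolding N X_def Y_def by (simp add: common_nbhd_def)
  then have "(X - real (card V)) / real (card V) \<le> Y / real (card V)"
    using n0 by (simp add: divide_right_mono)
  moreover have "(X - real (card V)) / real (card V) = X / real (card V) - 1"
    using n0 by (simp add: diff_divide_distrib)
  ultimately show ?thesis
    unfolding X_def Y_def by (simp add: deg add_divide_distrib diff_divide_distrib)
qed

lemma triangle_structure:
  assumes G: "sgraph V adj" and T: "T \<in> cliques V adj 3"
  obtains a b c where "T = {a, b, c}" and "a \<noteq> b" "a \<noteq> c" "b \<noteq> c"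
    and "is_clique V adj {a, b, c}"
    and "cliques_in V adj 2 {a, b, c} = {{a, b}, {a, c}, {b, c}}"
proof -
  have cT: "is_clique V adj T" and "card T = 3" using T unfolding cliques_def by auto
  then obtain a b c where abc: "T = {a, b, c}" "a \<noteq> b" "b \<noteq> c" "a \<noteq> c"
    by (auto simp: card_3_iff)
  have sub_clique: "is_clique V adj e" if "e \<subseteq> T" for e
    using cT that unfolding is_clique_def by blast
  have "cliques_in V adj 2 T = {e. e \<subseteq> {a, b, c} \<and> card e = 2}"
    using sub_clique abc(1) finite_subset[of _ T] unfolding cliques_in_def cliques_def by auto
  also have "\<dots> = {{a, b}, {a, c}, {b, c}}"
    using abc(2-4) by (auto simp: card_2_iff)
  finally show ?thesis using that abc cT by simp
qed

lemma sum_triangle_edges: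
  assumes "a \<noteq> b" "a \<noteq> c" "b \<noteq> c"
  shows "(\<Sum>e\<in>{{a, b}, {a, c}, {b, c}}. h e) = h {a, b} + h {a, c} + h {b, c}"
  using assms by (simp add: doubleton_eq_iff add.assoc)

lemma cD_singleton:
  assumes G: "sgraph V adj" and v: "v \<in> V"
  shows "cD V adj {v} = real (vdeg V adj v) / real (card V)"
  unfolding cD_def vdeg_eq_clique_deg[OF G v] ..

lemma Dminus_edge:
  "u \<noteq> v \<Longrightarrow> Dminus \<beta> V adj {u, v} = min (cD V adj {u, v}) (2 * \<beta>)"
  unfolding Dminus_def by simp

lemma Dminus_triangle:
  "\<lbrakk>a \<noteq> b; a \<noteq> c; b \<noteq> c\<rbrakk> \<Longrightarrow> Dminus \<beta> V adj {a, b, c} = min (cD V adj {a, b, c}) \<beta>"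
  unfolding Dminus_def by simp

theorem mainTheorem14:
  fixes V :: "'a set" and adj :: "'a \<Rightarrow> 'a \<Rightarrow> bool" and \<beta> :: real and T :: "'a set"
  assumes G: "sgraph V adj"
    and b1: "1/4 \<le> \<beta>" and b2: "\<beta> < 1/3"
    and mindeg: "\<forall>v\<in>V. real (vdeg V adj v) \<ge> (1 - \<beta>) * real (card V)"
    and mindeg_att: "\<exists>v\<in>V. real (vdeg V adj v) = (1 - \<beta>) * real (card V)"
    and T: "T \<in> cliques V adj 3"
  shows "Dtilde \<beta> V adj T \<ge>
           (1 - 2 / (29 - 75 * \<beta>)) * ((4 * \<beta> - 1) / (1 - 2 * \<beta>)) * Dplus \<beta> V adj T
           - (1 - 2 * \<beta>) * (\<Sum>e\<in>cliques_in V adj 2 T. Dplus \<beta> V adj e / (Dplus \<beta> V adj e + \<beta>))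
       \<and> (Dtilde \<beta> V adj T =
           (1 - 2 / (29 - 75 * \<beta>)) * ((4 * \<beta> - 1) / (1 - 2 * \<beta>)) * Dplus \<beta> V adj T
           - (1 - 2 * \<beta>) * (\<Sum>e\<in>cliques_in V adj 2 T. Dplus \<beta> V adj e / (Dplus \<beta> V adj e + \<beta>))
          \<longrightarrow> \<not> heavy \<beta> V adj T \<and> (\<forall>v\<in>T. real (vdeg V adj v) = (1 - \<beta>) * real (card V)))"
proof -
  obtain a b c where abc: "T = {a, b, c}" "a \<noteq> b" "a \<noteq> c" "b \<noteq> c"
    and cT: "is_clique V adj {a, b, c}" and edges: "cliques_in V adj 2 {a, b, c} = {{a, b}, {a, c}, {b, c}}"
    using triangle_structure[OF G T] by blast
  have inV: "v \<in> V" if "v \<in> T" for v using cT that abc(1) unfolding is_clique_def by blast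
  have n0: "0 < real (card V)"
    using inV[of a] abc(1) G unfolding sgraph_def by (auto simp: card_gt_0_iff)
  have deg_iff: "real (vdeg V adj v) = (1 - \<beta>) * real (card V) \<longleftrightarrow> cD V adj {v} = 1 - \<beta>"
    and deg: "1 - \<beta> \<le> cD V adj {v}" if "v \<in> T" for v
    using mindeg inV[OF that] n0 by (auto simp: cD_singleton[OF G] field_simps)
  have degs: "1 - \<beta> \<le> cD V adj {a}" "1 - \<beta> \<le> cD V adj {b}" "1 - \<beta> \<le> cD V adj {c}"
    using deg abc(1) by simp_all
  have sub: "is_clique V adj K \<and> finite K" if "K \<subseteq> {a, b, c}" for K
    using cT that finite_subset[OF that] unfolding is_clique_def by blast
  have codeg: "cD V adj {a, b} \<le> cD V adj {a}" "cD V adj {a, c} \<le> cD V adj {c}"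
    "cD V adj {b, c} \<le> cD V adj {b}"
    by (rule cD_antimono[OF G]; use sub in auto)+
  note bound = triangle_loss_inequality[OF b1 b2 degs codeg triangle_incl_excl[OF G cT]]
  show ?thesis
    unfolding abc(1) Dtilde_def heavy_def Dplus_def edges sum_triangle_edges[OF abc(2-4)]
      Dminus_edge[OF abc(2)] Dminus_edge[OF abc(3)] Dminus_edge[OF abc(4)]
      Dminus_triangle[OF abc(2-4)]
    by (intro conjI impI bound(1); drule bound(2); use deg_iff abc(1) in auto)
qed

end
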